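(* An $AB\bar B$-formula $\varphi$ is satisfied by some finite interval structure if and only if it is featured by some $\varphi$-compass structure of length $N\le 2^{2^{7|\varphi|}}$.
   Context: Syntax: $AB\bar B$-formulas are built from a set $\mathcal{P}$ of propositional variables using $\neg$, $\vee$ and unary modalities $\langle A\rangle,\langle B\rangle,\langle\bar B\rangle$ ($[R]\psi=\neg\langle R\rangle\neg\psi$); $|\varphi|$ is the size (number of subformulas) of $\varphi$. Semantics: an ordinal $N\le\omega$ is identified with $\{0,\dots,N-1\}$; $\mathbb{I}_N$ is the set of intervals $[x,y]$ with $x,y\in N$, $x<y$. $[x,y]\,A\,[x',y']$ iff $y=x'$; $[x,y]\,B\,[x',y']$ iff $x=x'$ and $y'<y$; $[x,y]\,\bar B\,[x',y']$ iff $x=x'$ and $y<y'$. An interval structure $\mathcal{S}=(\mathbb{I}_N,A,B,\bar B,\sigma)$ has $\sigma:\mathbb{I}_N\to\mathcal{P}(\mathcal{P})$; it is finite if $N<\omega$. $\mathcal{S},I\models p$ iff $p\in\sigma(I)$; booleans as usual; $\mathcal{S},I\models\langle R\rangle\psi$ iff some $J$ with $I\,R\,J$ has $\mathcal{S},J\models\psi$. $\mathcal{S}$ satisfies $\varphi$ if $\mathcal{S},I\models\varphi$ for some $I$. Atoms: $Cl(\varphi)$ is the set of subformulas of $\varphi$ and their negations (identifying $\neg\neg\alpha$ with $\alpha$, $\neg\langle R\rangle\alpha$ with $[R]\neg\alpha$); $Cl^+(\varphi)$ adds all $\langle R\rangle\alpha$, $\neg\langle R\rangle\alpha$ for $R\in\{A,B,\bar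 B\}$, $\alpha\in Cl(\varphi)$. A $\varphi$-atom is a nonempty $F\subseteq Cl^+(\varphi)$ with: $\alpha\in F$ iff $\neg\alpha\notin F$ for all $\alpha\in Cl^+(\varphi)$, and $\alpha\vee\beta\in F$ iff $\alpha\in F$ or $\beta\in F$. $obs(F)=\{\alpha\in Cl(\varphi):\alpha\in F\}$, $Req_R(F)=\{\alpha\in Cl(\varphi):\langle R\rangle\alpha\in F\}$. $F\leadsto_A G$ iff $Req_A(F)=obs(G)\cup Req_B(G)\cup Req_{\bar B}(G)$; $F\leadsto_B G$ iff $obs(F)\cup Req_{\bar B}(F)\subseteq Req_{\bar B}(G)\subseteq obs(F)\cup Req_{\bar B}(F)\cup Req_B(F)$ and $obs(G)\cup Req_B(G)\subseteq Req_B(F)\subseteq obs(G)\cup Req_B(G)\cup Req_{\bar B}(G)$. Compass structures: $\mathbb{P}_N=\{(x,y):0\le x<y<N\}$ with relations $A,B,\bar B$ as for the intervals $[x,y]$. A $\varphi$-compass structure of length $N$ is $(\mathbb{P}_N,\mathcal{L})$, $\mathcal{L}$ mapping points to $\varphi$-atoms, such that $p\,R\,q$ implies $\mathcal{L}(p)\leadsto_R\mathcal{L}(q)$ for $R\in\{A,B\}$ (consistency), and for every $p$, $R\in\{A,B,\bar B\}$, $\alpha\in Req_R(\mathcal{L}(p))$ there is $q$ with $p\,R\,q$ and $\alpha\in obs(\mathcal{L}(q))$ (fulfillment). It features $\alpha$ if $\alpha\in\mathcal{L}(p)$ for some $p$. *)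

theory Defs
  imports Main
begin

datatype rel = RA | RB | RBb

datatype 'p form = Var 'p | Neg "'p form" | Or "'p form" "'p form" | Dia rel "'p form"

abbreviation Box :: "rel \<Rightarrow> 'p form \<Rightarrow> 'p form" where
  "Box R a \<equiv> Neg (Dia R (Neg a))"

fun subs :: "'p form \<Rightarrow> 'p form set" where
  "subs (Var p) = {Var p}"
| "subs (Neg a) = insert (Neg a) (subs a)"
| "subs (Or a b) = insert (Or a b) (subs a \<union> subs b)"
| "subs (Dia R a) = insert (Dia R a) (subs a)"

definition fsize :: "'p form \<Rightarrow> nat" where
  "fsize phi = card (subs phi)"

fun sat :: "nat \<Rightarrow> (nat \<Rightarrow> nat \<Rightarrow> 'p set) \<Rightarrow> nat \<Rightarrow> nat \<Rightarrow> 'p form \<Rightarrow> bool" where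
  "sat N \<sigma> x y (Var p) = (p \<in> \<sigma> x y)"
| "sat N \<sigma> x y (Neg a) = (\<not> sat N \<sigma> x y a)"
| "sat N \<sigma> x y (Or a b) = (sat N \<sigma> x y a \<or> sat N \<sigma> x y b)"
| "sat N \<sigma> x y (Dia RA a) = (\<exists>z. y < z \<and> z < N \<and> sat N \<sigma> y z a)"
| "sat N \<sigma> x y (Dia RB a) = (\<exists>z. x < z \<and> z < y \<and> sat N \<sigma> x z a)"
| "sat N \<sigma> x y (Dia RBb a) = (\<exists>z. y < z \<and> z < N \<and> sat N \<sigma> x z a)"

definition fin_satisfiable :: "'p form \<Rightarrow> bool" where
  "fin_satisfiable phi \<longleftrightarrow>
     (\<exists>(N::nat) \<sigma> x y. x < y \<and> y < N \<and> sat N \<sigma> x y phi)"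

fun neg :: "'p form \<Rightarrow> 'p form" where
  "neg (Neg a) = a"
| "neg a = Neg a"

text \<open>Normal form modulo the identification of \<not>\<not>alpha with alpha
  (the identification of \<not><R>alpha with [R]\<not>alpha is then syntactic identity).\<close>
fun norm :: "'p form \<Rightarrow> 'p form" where
  "norm (Var p) = Var p"
| "norm (Neg a) = neg (norm a)"
| "norm (Or a b) = Or (norm a) (norm b)"
| "norm (Dia R a) = Dia R (norm a)"

definition Cl :: "'p form \<Rightarrow> 'p form set" where
  "Cl phi = norm ` subs phi \<union> neg ` norm ` subs phi"

definition ClPlus :: "'p form \<Rightarrow> 'p form set" where
  "ClPlus phi = Cl phi \<union> {Dia R a | R a. a \<in> Cl phi} \<union> {neg (Dia R a) | R a. a \<in> Cl phi}"

definition is_atom :: "'p form \<Rightarrow> 'p form set \<Rightarrow> bool" where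
  "is_atom phi F \<longleftrightarrow> F \<noteq> {} \<and> F \<subseteq> ClPlus phi
     \<and> (\<forall>a \<in> ClPlus phi. a \<in> F \<longleftrightarrow> neg a \<notin> F)
     \<and> (\<forall>a b. Or a b \<in> ClPlus phi \<longrightarrow> (Or a b \<in> F \<longleftrightarrow> a \<in> F \<or> b \<in> F))"

definition obs :: "'p form \<Rightarrow> 'p form set \<Rightarrow> 'p form set" where
  "obs phi F = {a \<in> Cl phi. a \<in> F}"

definition Req :: "'p form \<Rightarrow> rel \<Rightarrow> 'p form set \<Rightarrow> 'p form set" where
  "Req phi R F = {a \<in> Cl phi. Dia R a \<in> F}"

definition leadsA :: "'p form \<Rightarrow> 'p form set \<Rightarrow> 'p form set \<Rightarrow> bool" where
  "leadsA phi F G \<longleftrightarrow> Req phi RA F = obs phi G \<union> Req phi RB G \<union> Req phi RBb G"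

definition leadsB :: "'p form \<Rightarrow> 'p form set \<Rightarrow> 'p form set \<Rightarrow> bool" where
  "leadsB phi F G \<longleftrightarrow>
     obs phi F \<union> Req phi RBb F \<subseteq> Req phi RBb G
   \<and> Req phi RBb G \<subseteq> obs phi F \<union> Req phi RBb F \<union> Req phi RB F
   \<and> obs phi G \<union> Req phi RB G \<subseteq> Req phi RB F
   \<and> Req phi RB F \<subseteq> obs phi G \<union> Req phi RB G \<union> Req phi RBb G"

definition points :: "nat \<Rightarrow> (nat \<times> nat) set" where
  "points N = {(x, y). x < y \<and> y < N}"

fun prel :: "rel \<Rightarrow> nat \<times> nat \<Rightarrow> nat \<times> nat \<Rightarrow> bool" where
  "prel RA (x, y) (x', y') = (y = x')"
| "prel RB (x, y) (x', y') = (x = x' \<and> y' < y)"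
| "prel RBb (x, y) (x', y') = (x = x' \<and> y < y')"

definition compass :: "'p form \<Rightarrow> nat \<Rightarrow> (nat \<times> nat \<Rightarrow> 'p form set) \<Rightarrow> bool" where
  "compass phi N L \<longleftrightarrow>
     (\<forall>p \<in> points N. is_atom phi (L p))
   \<and> (\<forall>p \<in> points N. \<forall>q \<in> points N. prel RA p q \<longrightarrow> leadsA phi (L p) (L q))
   \<and> (\<forall>p \<in> points N. \<forall>q \<in> points N. prel RB p q \<longrightarrow> leadsB phi (L p) (L q))
   \<and> (\<forall>p \<in> points N. \<forall>R. \<forall>a \<in> Req phi R (L p).
        \<exists>q \<in> points N. prel R p q \<and> a \<in> obs phi (L q))"

definition features :: "'p form \<Rightarrow> nat \<Rightarrow> (nat \<times> nat \<Rightarrow> 'p form set) \<Rightarrow> 'p form \<Rightarrow> bool" where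
  "features phi N L a \<longleftrightarrow> (\<exists>p \<in> points N. a \<in> L p)"

end

theory Submission
  imports Defs
begin

text \<open>
  Soundness: reading off the propositional variables of a compass structure gives an
  interval structure of the same length in which each formula of the closure holds exactly
  on the intervals whose label contains it (truth lemma; consistency and fulfilment
  handle the diamonds).

  Completeness: labelling each interval of a model with the formulas it satisfies gives a
  compass structure.  Its length is then reduced.  The row content of a label (what it
  observes and requires in directions B and Bbar) is constant along a row, and A-consistency
  depends only on row contents.  If two columns 0 < y < y' carry the same set of labels, the
  columns y, ..., y' - 1 are cut out: rows starting before y are spliced at column y with
  the row of a point on column y' carrying the same label, and splicing good rows yields
  good rows.  Iterating, the length drops to at most 2^(number of atoms), and an atom is
  determined by its at most 7 |phi| formulas that are not negations.
\<close>

section \<open>Syntax: subformulas, normal forms and the closure\<close>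

lemma subs_self: "phi \<in> subs phi"
  by (cases phi) auto

lemma subs_trans: "x \<in> subs phi \<Longrightarrow> subs x \<subseteq> subs phi"
  by (induction phi) auto

lemma finite_subs: "finite (subs phi)"
  by (induction phi) auto

lemma sat_neg: "sat N \<sigma> x y (neg a) = (\<not> sat N \<sigma> x y a)"
  by (cases a) auto

lemma sat_norm: "sat N \<sigma> x y (norm a) = sat N \<sigma> x y a"
proof (induction a arbitrary: x y)
  case (Dia R a) then show ?case by (cases R) auto
qed (auto simp: sat_neg)

lemma neg_of_non_Neg: "(\<forall>c. u \<noteq> Neg c) \<Longrightarrow> neg u = Neg u"
  by (cases u) auto

lemma norm_no_double_Neg: "norm a \<noteq> Neg (Neg c)"
proof (induction a arbitrary: c)
  case (Neg a) then show ?case by (cases "norm a") auto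
qed auto

lemma neg_neg_norm: "neg (neg (norm a)) = norm a"
  using norm_no_double_Neg[of a] neg_of_non_Neg by (cases "norm a") auto

fun imm :: "'p form \<Rightarrow> 'p form set" where
  "imm (Var p) = {}"
| "imm (Neg a) = {a}"
| "imm (Or a b) = {a, b}"
| "imm (Dia R a) = {a}"

lemma imm_norm_subs: "w \<in> subs x \<Longrightarrow> imm (norm w) \<subseteq> norm ` subs x"
proof (induction x arbitrary: w)
  case (Neg x)
  show ?case
  proof (cases "w \<in> subs x")
    case True then show ?thesis using Neg.IH by auto
  next
    case False
    then have w: "w = Neg x" using Neg.prems by auto
    show ?thesis
    proof (cases "\<exists>c. norm x = Neg c")
      case True
      then obtain c where c: "norm x = Neg c" by auto
      have "c \<in> norm ` subs x" using Neg.IH[OF subs_self] c by auto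
      then obtain w' where "w' \<in> subs x" "c = norm w'" by auto
      then have "imm c \<subseteq> norm ` subs x" using Neg.IH by blast
      then show ?thesis using w c by auto
    next
      case False
      then have "norm w = Neg (norm x)" using w neg_of_non_Neg by auto
      then show ?thesis using subs_self[of x] by auto
    qed
  qed
next
  case (Or x1 x2)
  then show ?case using subs_self[of x1] subs_self[of x2] by (auto 4 3)
next
  case (Dia R x)
  then show ?case using subs_self[of x] by auto
qed auto

lemma Cl_imm: "t \<in> Cl phi \<Longrightarrow> imm t \<subseteq> Cl phi"
proof -
  assume "t \<in> Cl phi"
  then obtain x where x: "x \<in> subs phi" "t = norm x \<or> t = neg (norm x)"
    by (auto simp: Cl_def)
  have sub: "\<And>w. w \<in> subs phi \<Longrightarrow> imm (norm w) \<subseteq> Cl phi"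
    using imm_norm_subs by (fastforce simp: Cl_def)
  show ?thesis
  proof (cases "t = norm x")
    case True then show ?thesis using sub x(1) by simp
  next
    case False
    then have t: "t = neg (norm x)" using x by auto
    show ?thesis
    proof (cases "\<exists>c. norm x = Neg c")
      case True
      then obtain c where c: "norm x = Neg c" by auto
      then have "c \<in> norm ` subs phi" using imm_norm_subs[OF x(1)] subs_trans[OF x(1)] by auto
      then show ?thesis using t c sub by auto
    next
      case False
      then have "t = Neg (norm x)" using t neg_of_non_Neg by auto
      then show ?thesis using x(1) by (auto simp: Cl_def)
    qed
  qed
qed

lemma Cl_Neg: "Neg c \<in> Cl phi \<Longrightarrow> c \<in> Cl phi"
  using Cl_imm by fastforce

lemma Cl_Or: "Or a b \<in> Cl phi \<Longrightarrow> a \<in> Cl phi \<and> b \<in> Cl phi"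
  using Cl_imm by fastforce

lemma Cl_Dia: "Dia R c \<in> Cl phi \<Longrightarrow> c \<in> Cl phi"
  using Cl_imm by fastforce

lemma norm_in_Cl: "norm phi \<in> Cl phi"
  using subs_self[of phi] by (auto simp: Cl_def)

lemma Cl_neg: "t \<in> Cl phi \<Longrightarrow> neg t \<in> Cl phi"
  by (auto simp: Cl_def neg_neg_norm)

lemma Cl_ClPlus: "t \<in> Cl phi \<Longrightarrow> t \<in> ClPlus phi"
  by (auto simp: ClPlus_def)

lemma Dia_ClPlus: "t \<in> Cl phi \<Longrightarrow> Dia R t \<in> ClPlus phi"
  by (auto simp: ClPlus_def)

lemma ClPlus_neg: "t \<in> ClPlus phi \<Longrightarrow> neg t \<in> ClPlus phi"
  unfolding ClPlus_def using Cl_neg by fastforce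

lemma ClPlus_Or: "Or a b \<in> ClPlus phi \<Longrightarrow> a \<in> Cl phi \<and> b \<in> Cl phi"
  using Cl_Or by (auto simp: ClPlus_def)

lemma finite_Cl: "finite (Cl phi)"
  unfolding Cl_def using finite_subs by auto

lemma UNIV_rel: "(UNIV :: rel set) = {RA, RB, RBb}"
  using rel.exhaust by auto

lemma ClPlus_cover:
  "ClPlus phi \<subseteq> Cl phi \<union> (\<lambda>(R, a). Dia R a) ` (UNIV \<times> Cl phi)
                \<union> (\<lambda>(R, a). Neg (Dia R a)) ` (UNIV \<times> Cl phi)"
  unfolding ClPlus_def by auto

lemma finite_ClPlus: "finite (ClPlus phi)"
  by (rule finite_subset[OF ClPlus_cover]) (simp add: finite_Cl UNIV_rel)

section \<open>Row content and good rows\<close>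

text \<open>What a label says about the whole row it lies on: the formulas it observes and
  those it requires at earlier or later points of the row.  B-consistency keeps this set
  fixed along a row, and A-consistency says that the A-requests of a point are exactly the
  row content of the row starting where the point ends.\<close>
definition row_content :: "'p form \<Rightarrow> 'p form set \<Rightarrow> 'p form set" where
  "row_content phi F = obs phi F \<union> Req phi RB F \<union> Req phi RBb F"

lemma leadsB_row_content: "leadsB phi F G \<Longrightarrow> row_content phi F = row_content phi G"
  unfolding leadsB_def row_content_def by blast

lemma leadsB_trans: "leadsB phi F G \<Longrightarrow> leadsB phi G H \<Longrightarrow> leadsB phi F H"
  unfolding leadsB_def by (elim conjE, intro conjI) blast+

lemma leadsB_obs_B: "leadsB phi F G \<Longrightarrow> obs phi G \<subseteq> Req phi RB F"
  unfolding leadsB_def by blast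

lemma leadsB_obs_Bb: "leadsB phi F G \<Longrightarrow> obs phi F \<subseteq> Req phi RBb G"
  unfolding leadsB_def by blast

lemma leadsA_iff_row_content: "leadsA phi F G \<longleftrightarrow> Req phi RA F = row_content phi G"
  unfolding leadsA_def row_content_def by blast

definition good_row :: "'p form \<Rightarrow> nat \<Rightarrow> nat \<Rightarrow> (nat \<Rightarrow> 'p form set) \<Rightarrow> bool" where
  "good_row phi lo hi r \<longleftrightarrow>
     (\<forall>b b'. lo < b' \<longrightarrow> b' < b \<longrightarrow> b < hi \<longrightarrow> leadsB phi (r b) (r b'))
   \<and> (\<forall>b a. lo < b \<longrightarrow> b < hi \<longrightarrow> a \<in> Req phi RB (r b) \<longrightarrow>
        (\<exists>c. lo < c \<and> c < b \<and> a \<in> obs phi (r c)))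
   \<and> (\<forall>b a. lo < b \<longrightarrow> b < hi \<longrightarrow> a \<in> Req phi RBb (r b) \<longrightarrow>
        (\<exists>c. b < c \<and> c < hi \<and> a \<in> obs phi (r c)))"

lemma row_leadsB:
  "good_row phi lo hi r \<Longrightarrow> lo < b' \<Longrightarrow> b' < b \<Longrightarrow> b < hi \<Longrightarrow> leadsB phi (r b) (r b')"
  unfolding good_row_def by blast

lemma row_fulfil_B:
  "good_row phi lo hi r \<Longrightarrow> lo < b \<Longrightarrow> b < hi \<Longrightarrow> a \<in> Req phi RB (r b) \<Longrightarrow>
   \<exists>c. lo < c \<and> c < b \<and> a \<in> obs phi (r c)"
  unfolding good_row_def by blast

lemma row_fulfil_Bb:
  "good_row phi lo hi r \<Longrightarrow> lo < b \<Longrightarrow> b < hi \<Longrightarrow> a \<in> Req phi RBb (r b) \<Longrightarrow>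
   \<exists>c. b < c \<and> c < hi \<and> a \<in> obs phi (r c)"
  unfolding good_row_def by blast

lemma row_content_const:
  assumes "good_row phi lo hi r" "lo < b" "b < hi" "lo < c" "c < hi"
  shows "row_content phi (r b) = row_content phi (r c)"
proof (cases b c rule: linorder_cases)
  case less then show ?thesis using assms row_leadsB[OF assms(1), of b c] leadsB_row_content by metis
next
  case greater then show ?thesis using assms row_leadsB[OF assms(1), of c b] leadsB_row_content by metis
qed simp

lemma row_content_fulfilled:
  assumes row: "good_row phi lo hi r" and b: "lo < b" "b < hi"
    and a: "a \<in> row_content phi (r b)"
  shows "\<exists>c. lo < c \<and> c < hi \<and> a \<in> obs phi (r c)"
  using a b row_fulfil_B[OF row b] row_fulfil_Bb[OF row b] unfolding row_content_def
  by (meson Un_iff less_trans)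

lemma good_row_shift:
  assumes "good_row phi (lo + k) (hi + k) r"
  shows "good_row phi lo hi (\<lambda>b. r (b + k))"
  unfolding good_row_def
proof (intro conjI allI impI)
  fix b b' assume "lo < b'" "b' < b" "b < hi"
  then show "leadsB phi (r (b + k)) (r (b' + k))" using row_leadsB[OF assms, of "b' + k" "b + k"] by simp
next
  fix b a assume "lo < b" "b < hi" "a \<in> Req phi RB (r (b + k))"
  then obtain c where "lo + k < c" "c < b + k" "a \<in> obs phi (r c)"
    using row_fulfil_B[OF assms, of "b + k" a] by auto
  then show "\<exists>c. lo < c \<and> c < b \<and> a \<in> obs phi (r (c + k))"
    by (intro exI[of _ "c - k"]) auto
next
  fix b a assume "lo < b" "b < hi" "a \<in> Req phi RBb (r (b + k))"
  then obtain c where "b + k < c" "c < hi + k" "a \<in> obs phi (r c)"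
    using row_fulfil_Bb[OF assms, of "b + k" a] by auto
  then show "\<exists>c. b < c \<and> c < hi \<and> a \<in> obs phi (r (c + k))"
    by (intro exI[of _ "c - k"]) auto
qed

definition row_splice :: "(nat \<Rightarrow> 'a) \<Rightarrow> (nat \<Rightarrow> 'a) \<Rightarrow> nat \<Rightarrow> nat \<Rightarrow> nat \<Rightarrow> 'a" where
  "row_splice r1 r2 y d b = (if b < y then r1 b else r2 (b + d))"

lemma row_splice_shifted:
  assumes "y + d \<le> c" shows "row_splice r1 r2 y d (c - d) = r2 c"
proof -
  have "\<not> c - d < y" "c - d + d = c" using assms by linarith+
  then show ?thesis by (simp add: row_splice_def)
qed

text \<open>Two good rows that carry the same label at the splicing columns splice into a good
  row: a request that would leave the part taken from one row can be transported, by
  B-consistency, to the common label and is then fulfilled in the other row.\<close>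
context
  fixes phi :: "'p form" and r1 r2 :: "nat \<Rightarrow> 'p form set" and lo1 hi1 lo2 hi y d :: nat
  assumes r1: "good_row phi lo1 hi1 r1" and r2: "good_row phi lo2 (hi + d) r2"
    and y: "lo1 < y" "y < hi1" "y < hi" and y2: "lo2 < y + d"
    and same: "r1 y = r2 (y + d)"
begin

text \<open>B-consistency across the splicing column goes through the common label.\<close>
lemma row_splice_leadsB:
  assumes b: "lo1 < b'" "b' < b" "b < hi"
  shows "leadsB phi (row_splice r1 r2 y d b) (row_splice r1 r2 y d b')"
proof (cases "b < y")
  case True then show ?thesis using b y row_leadsB[OF r1, of b' b] by (simp add: row_splice_def)
next
  case b_late: False
  show ?thesis
  proof (cases "b' < y")
    case False
    then show ?thesis using b b_late y2 row_leadsB[OF r2, of "b' + d" "b + d"]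
      by (simp add: row_splice_def)
  next
    case True
    have spliced: "row_splice r1 r2 y d b = r2 (b + d)" "row_splice r1 r2 y d b' = r1 b'"
      using True b_late by (simp_all add: row_splice_def)
    have r1_part: "leadsB phi (r1 y) (r1 b')" using row_leadsB[OF r1, of b' y] b True y by simp
    show ?thesis
    proof (cases "b = y")
      case True then show ?thesis using spliced same r1_part by simp
    next
      case False
      then have "leadsB phi (r2 (b + d)) (r1 y)"
        using row_leadsB[OF r2, of "y + d" "b + d"] b b_late y2 same by simp
      from leadsB_trans[OF this r1_part] show ?thesis using spliced by simp
    qed
  qed
qed

text \<open>A B-request in the part taken from r2 that points before column y + d is a B-request
  of the common label, hence fulfilled in r1.\<close>
lemma row_splice_fulfil_B:
  assumes b: "lo1 < b" "b < hi" and a: "a \<in> Req phi RB (row_splice r1 r2 y d b)"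
  shows "\<exists>c. lo1 < c \<and> c < b \<and> a \<in> obs phi (row_splice r1 r2 y d c)"
proof (cases "b < y")
  case True
  then have "a \<in> Req phi RB (r1 b)" using a by (simp add: row_splice_def)
  then obtain c where "lo1 < c" "c < b" "a \<in> obs phi (r1 c)"
    using row_fulfil_B[OF r1, of b a] b y True by auto
  then show ?thesis using True by (intro exI[of _ c]) (simp add: row_splice_def)
next
  case b_late: False
  then have "a \<in> Req phi RB (r2 (b + d))" using a by (simp add: row_splice_def)
  then obtain c where c: "lo2 < c" "c < b + d" "a \<in> obs phi (r2 c)"
    using row_fulfil_B[OF r2, of "b + d" a] b b_late y2 by auto
  show ?thesis
  proof (cases "y + d \<le> c")
    case True
    then have "row_splice r1 r2 y d (c - d) = r2 c" by (rule row_splice_shifted)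
    then show ?thesis using c b True y by (intro exI[of _ "c - d"]) auto
  next
    case False
    then have "leadsB phi (r2 (y + d)) (r2 c)"
      using row_leadsB[OF r2, of c "y + d"] c b_late y by simp
    then have "a \<in> Req phi RB (r1 y)" using c(3) same leadsB_obs_B by (metis subsetD)
    then obtain w where "lo1 < w" "w < y" "a \<in> obs phi (r1 w)"
      using row_fulfil_B[OF r1, of y a] y by blast
    then show ?thesis using b_late by (intro exI[of _ w]) (simp add: row_splice_def)
  qed
qed

text \<open>Symmetrically, a Bbar-request in the part taken from r1 that points beyond column y
  is a Bbar-request of the common label, hence fulfilled in r2.\<close>
lemma row_splice_fulfil_Bb:
  assumes b: "lo1 < b" "b < hi" and a: "a \<in> Req phi RBb (row_splice r1 r2 y d b)"
  shows "\<exists>c. b < c \<and> c < hi \<and> a \<in> obs phi (row_splice r1 r2 y d c)"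
proof (cases "b < y")
  case False
  then have "a \<in> Req phi RBb (r2 (b + d))" using a by (simp add: row_splice_def)
  then obtain c where c: "b + d < c" "c < hi + d" "a \<in> obs phi (r2 c)"
    using row_fulfil_Bb[OF r2, of "b + d" a] b y2 False by auto
  moreover have "row_splice r1 r2 y d (c - d) = r2 c" using c False by (intro row_splice_shifted) simp
  ultimately show ?thesis by (intro exI[of _ "c - d"]) auto
next
  case True
  then have "a \<in> Req phi RBb (r1 b)" using a by (simp add: row_splice_def)
  then obtain c where c: "b < c" "c < hi1" "a \<in> obs phi (r1 c)"
    using row_fulfil_Bb[OF r1, of b a] b y True by auto
  consider "c < y" | "c = y" | "y < c" by linarith
  then show ?thesis
  proof cases
    case 1
    then show ?thesis using c y by (intro exI[of _ c]) (simp add: row_splice_def)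
  next
    case 2
    then show ?thesis using c y same by (intro exI[of _ y]) (simp add: row_splice_def)
  next
    case 3
    have "leadsB phi (r1 c) (r1 y)" using row_leadsB[OF r1, of y c] c 3 y by simp
    then have "a \<in> Req phi RBb (r2 (y + d))" using c(3) same leadsB_obs_Bb by (metis subsetD)
    then obtain w where w: "y + d < w" "w < hi + d" "a \<in> obs phi (r2 w)"
      using row_fulfil_Bb[OF r2, of "y + d" a] y y2 by auto
    moreover have "row_splice r1 r2 y d (w - d) = r2 w" using w by (intro row_splice_shifted) simp
    ultimately show ?thesis using True by (intro exI[of _ "w - d"]) auto
  qed
qed

lemma good_row_splice: "good_row phi lo1 hi (row_splice r1 r2 y d)"
  unfolding good_row_def
  using row_splice_leadsB row_splice_fulfil_B row_splice_fulfil_Bb by blast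

end

lemma compassI:
  assumes atom: "\<And>x y. x < y \<Longrightarrow> y < N \<Longrightarrow> is_atom phi (L (x, y))"
    and cons_A: "\<And>x y z. x < y \<Longrightarrow> y < z \<Longrightarrow> z < N \<Longrightarrow> leadsA phi (L (x, y)) (L (y, z))"
    and rows: "\<And>x. good_row phi x N (\<lambda>b. L (x, b))"
    and fulfil_A: "\<And>x y a. x < y \<Longrightarrow> y < N \<Longrightarrow> a \<in> Req phi RA (L (x, y)) \<Longrightarrow>
                     \<exists>z. y < z \<and> z < N \<and> a \<in> obs phi (L (y, z))"
  shows "compass phi N L"
  unfolding compass_def
proof (intro conjI ballI allI impI)
  fix p assume "p \<in> points N"
  then show "is_atom phi (L p)" using atom by (auto simp: points_def)
next
  fix p q assume "p \<in> points N" "q \<in> points N" "prel RA p q"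
  then show "leadsA phi (L p) (L q)" using cons_A by (cases p, cases q) (simp add: points_def)
next
  fix p q assume "p \<in> points N" "q \<in> points N" "prel RB p q"
  then show "leadsB phi (L p) (L q)"
    using row_leadsB[OF rows] by (cases p, cases q) (simp add: points_def)
next
  fix p R a assume p: "p \<in> points N" and a: "a \<in> Req phi R (L p)"
  obtain x y where xy: "p = (x, y)" "x < y" "y < N" using p by (auto simp: points_def)
  show "\<exists>q\<in>points N. prel R p q \<and> a \<in> obs phi (L q)"
  proof (cases R)
    case RA
    then obtain z where "y < z" "z < N" "a \<in> obs phi (L (y, z))" using fulfil_A xy a by blast
    then show ?thesis using RA xy by (intro bexI[of _ "(y, z)"]) (auto simp: points_def)
  next
    case RB
    then obtain z where "x < z" "z < y" "a \<in> obs phi (L (x, z))"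
      using row_fulfil_B[OF rows, of x y a] xy a by auto
    then show ?thesis using RB xy by (intro bexI[of _ "(x, z)"]) (auto simp: points_def)
  next
    case RBb
    then obtain z where "y < z" "z < N" "a \<in> obs phi (L (x, z))"
      using row_fulfil_Bb[OF rows, of x y a] xy a by auto
    then show ?thesis using RBb xy by (intro bexI[of _ "(x, z)"]) (auto simp: points_def)
  qed
qed

context
  fixes phi N L assumes compass: "compass phi N L"
begin

lemma compass_atom: "x < y \<Longrightarrow> y < N \<Longrightarrow> is_atom phi (L (x, y))"
  using compass unfolding compass_def points_def by blast

lemma compass_leadsA: "x < y \<Longrightarrow> y < z \<Longrightarrow> z < N \<Longrightarrow> leadsA phi (L (x, y)) (L (y, z))"
  using compass unfolding compass_def points_def by fastforce

lemma compass_fulfil: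
  "(x, y) \<in> points N \<Longrightarrow> a \<in> Req phi R (L (x, y)) \<Longrightarrow>
   \<exists>u v. (u, v) \<in> points N \<and> prel R (x, y) (u, v) \<and> a \<in> obs phi (L (u, v))"
  using compass unfolding compass_def by fast

lemma compass_row: "good_row phi x N (\<lambda>b. L (x, b))"
  unfolding good_row_def
proof (intro conjI allI impI)
  fix b b' assume "x < b'" "b' < b" "b < N"
  then show "leadsB phi (L (x, b)) (L (x, b'))"
    using compass unfolding compass_def points_def by force
next
  fix b a assume "x < b" "b < N" "a \<in> Req phi RB (L (x, b))"
  then show "\<exists>c. x < c \<and> c < b \<and> a \<in> obs phi (L (x, c))"
    using compass_fulfil[of x b a RB] by (auto simp: points_def)
next
  fix b a assume "x < b" "b < N" "a \<in> Req phi RBb (L (x, b))"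
  then show "\<exists>c. b < c \<and> c < N \<and> a \<in> obs phi (L (x, c))"
    using compass_fulfil[of x b a RBb] by (auto simp: points_def)
qed

lemma compass_fulfil_A:
  "x < y \<Longrightarrow> y < N \<Longrightarrow> a \<in> Req phi RA (L (x, y)) \<Longrightarrow> \<exists>z. y < z \<and> z < N \<and> a \<in> obs phi (L (y, z))"
  using compass_fulfil[of x y a RA] by (auto simp: points_def)

lemma compass_ReqA: "x < y \<Longrightarrow> y < z \<Longrightarrow> z < N \<Longrightarrow> Req phi RA (L (x, y)) = row_content phi (L (y, z))"
  using compass_leadsA leadsA_iff_row_content by blast

text \<open>In a compass structure a formula of the closure is requested in direction R at a
  point exactly when it holds at some R-successor: fulfilment gives one direction,
  consistency the other.\<close>
lemma Req_iff_successor: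
  assumes p: "(x, y) \<in> points N" and c: "c \<in> Cl phi"
  shows "c \<in> Req phi R (L (x, y)) \<longleftrightarrow>
         (\<exists>u v. (u, v) \<in> points N \<and> prel R (x, y) (u, v) \<and> c \<in> L (u, v))"
proof
  assume "c \<in> Req phi R (L (x, y))"
  then show "\<exists>u v. (u, v) \<in> points N \<and> prel R (x, y) (u, v) \<and> c \<in> L (u, v)"
    using compass_fulfil[OF p] by (fastforce simp: obs_def)
next
  assume "\<exists>u v. (u, v) \<in> points N \<and> prel R (x, y) (u, v) \<and> c \<in> L (u, v)"
  then obtain u v where q: "(u, v) \<in> points N" "prel R (x, y) (u, v)" "c \<in> obs phi (L (u, v))"
    using c by (auto simp: obs_def)
  show "c \<in> Req phi R (L (x, y))"
  proof (cases R)
    case RA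
    then show ?thesis using q p compass_ReqA[of x y v] by (auto simp: points_def row_content_def)
  next
    case RB
    then have "leadsB phi (L (x, y)) (L (u, v))" using q p compass unfolding compass_def by blast
    then show ?thesis using leadsB_obs_B q(3) RB by blast
  next
    case RBb
    then have "leadsB phi (L (u, v)) (L (x, y))" using q p compass unfolding compass_def by auto
    then show ?thesis using leadsB_obs_Bb q(3) RBb by blast
  qed
qed

end

section \<open>From compass structures to models\<close>

lemma sat_Dia:
  assumes "(x, y) \<in> points N"
  shows "sat N \<sigma> x y (Dia R a) \<longleftrightarrow>
         (\<exists>u v. (u, v) \<in> points N \<and> prel R (x, y) (u, v) \<and> sat N \<sigma> u v a)"
  using assms by (cases R) (auto simp: points_def intro: less_trans)

lemma compass_truth:
  assumes compass: "compass phi N L"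
  shows "t \<in> Cl phi \<Longrightarrow> (x, y) \<in> points N \<Longrightarrow>
         sat N (\<lambda>u v. {p. Var p \<in> L (u, v)}) x y t \<longleftrightarrow> t \<in> L (x, y)"
proof (induction t arbitrary: x y)
  case (Var p) then show ?case by simp
next
  case (Neg c)
  have "Neg c \<in> L (x, y) \<longleftrightarrow> c \<notin> L (x, y)"
    using compass_atom[OF compass] Neg.prems Cl_ClPlus[OF Neg.prems(1)]
    unfolding is_atom_def points_def by force
  then show ?case using Neg.IH[OF Cl_Neg] Neg.prems by simp
next
  case (Or a b)
  have "Or a b \<in> L (x, y) \<longleftrightarrow> a \<in> L (x, y) \<or> b \<in> L (x, y)"
    using compass_atom[OF compass] Or.prems Cl_ClPlus[OF Or.prems(1)]
    unfolding is_atom_def points_def by blast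
  then show ?case using Or.IH Cl_Or[OF Or.prems(1)] Or.prems by simp
next
  case (Dia R c)
  have c: "c \<in> Cl phi" using Cl_Dia Dia.prems(1) by blast
  have "Dia R c \<in> L (x, y) \<longleftrightarrow> c \<in> Req phi R (L (x, y))" using c by (simp add: Req_def)
  also have "\<dots> \<longleftrightarrow> (\<exists>u v. (u, v) \<in> points N \<and> prel R (x, y) (u, v) \<and> c \<in> L (u, v))"
    using Req_iff_successor[OF compass Dia.prems(2) c] .
  also have "\<dots> \<longleftrightarrow> (\<exists>u v. (u, v) \<in> points N \<and> prel R (x, y) (u, v) \<and>
                       sat N (\<lambda>u v. {p. Var p \<in> L (u, v)}) u v c)"
    using Dia.IH[OF c] by blast
  finally show ?case using sat_Dia[OF Dia.prems(2)] by simp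
qed

lemma compass_model:
  assumes "compass phi N L" and "features phi N L (norm phi)"
  shows "fin_satisfiable phi"
proof -
  obtain x y where p: "(x, y) \<in> points N" "norm phi \<in> L (x, y)"
    using assms(2) unfolding features_def by auto
  then have "sat N (\<lambda>u v. {p. Var p \<in> L (u, v)}) x y phi"
    using compass_truth[OF assms(1) norm_in_Cl p(1)] sat_norm by blast
  then show ?thesis using p(1) unfolding fin_satisfiable_def points_def by blast
qed

section \<open>From models to compass structures\<close>

definition model_label :: "nat \<Rightarrow> (nat \<Rightarrow> nat \<Rightarrow> 'p set) \<Rightarrow> 'p form \<Rightarrow> nat \<times> nat \<Rightarrow> 'p form set" where
  "model_label N \<sigma> phi = (\<lambda>(x, y). {t \<in> ClPlus phi. sat N \<sigma> x y t})"

lemma obs_model_label: "obs phi (model_label N \<sigma> phi (x, y)) = {t \<in> Cl phi. sat N \<sigma> x y t}"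
  by (auto simp: obs_def model_label_def Cl_ClPlus)

lemma Req_model_label:
  "Req phi R (model_label N \<sigma> phi (x, y)) = {t \<in> Cl phi. sat N \<sigma> x y (Dia R t)}"
  by (auto simp: Req_def model_label_def Dia_ClPlus)

lemma ex_between_split:
  fixes a c b :: nat
  assumes "a < c" "c < b"
  shows "(\<exists>w. a < w \<and> w < b \<and> P w) \<longleftrightarrow>
         P c \<or> (\<exists>w. a < w \<and> w < c \<and> P w) \<or> (\<exists>w. c < w \<and> w < b \<and> P w)"
  using assms by (metis less_trans linorder_neqE_nat)

lemma model_label_atom: "is_atom phi (model_label N \<sigma> phi (x, y))"
  unfolding is_atom_def
proof (intro conjI allI impI ballI)
  have "norm phi \<in> model_label N \<sigma> phi (x, y) \<or> neg (norm phi) \<in> model_label N \<sigma> phi (x, y)"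
    using Cl_ClPlus[OF norm_in_Cl] Cl_ClPlus[OF Cl_neg[OF norm_in_Cl]]
    by (auto simp: model_label_def sat_neg)
  then show "model_label N \<sigma> phi (x, y) \<noteq> {}" by blast
  show "model_label N \<sigma> phi (x, y) \<subseteq> ClPlus phi" by (auto simp: model_label_def)
next
  fix a assume "a \<in> ClPlus phi"
  then show "a \<in> model_label N \<sigma> phi (x, y) \<longleftrightarrow> neg a \<notin> model_label N \<sigma> phi (x, y)"
    using ClPlus_neg[of a phi] by (auto simp: model_label_def sat_neg)
next
  fix a b assume "Or a b \<in> ClPlus phi"
  then show "Or a b \<in> model_label N \<sigma> phi (x, y) \<longleftrightarrow>
             a \<in> model_label N \<sigma> phi (x, y) \<or> b \<in> model_label N \<sigma> phi (x, y)"
    using ClPlus_Or[of a b phi] Cl_ClPlus by (auto simp: model_label_def)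
qed

text \<open>Consistency of the model labelling: the existential quantifiers of the
  semantics split at the intermediate column.\<close>
lemma model_label_leadsA:
  assumes "y < z" "z < N"
  shows "leadsA phi (model_label N \<sigma> phi (x, y)) (model_label N \<sigma> phi (y, z))"
  unfolding leadsA_def Req_model_label obs_model_label
  using ex_between_split[OF assms, of "\<lambda>w. sat N \<sigma> y w _"] by auto

lemma model_label_leadsB:
  assumes "x < z'" "z' < z" "z < N"
  shows "leadsB phi (model_label N \<sigma> phi (x, z)) (model_label N \<sigma> phi (x, z'))"
  unfolding leadsB_def Req_model_label obs_model_label
  using assms ex_between_split[of z' z N "\<lambda>w. sat N \<sigma> x w _"]
    ex_between_split[of x z' z "\<lambda>w. sat N \<sigma> x w _"]
  by (auto intro: less_trans)

lemma model_compass: "compass phi N (model_label N \<sigma> phi)"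
  unfolding compass_def
proof (intro conjI ballI allI impI)
  fix p assume "p \<in> points N"
  then show "is_atom phi (model_label N \<sigma> phi p)" using model_label_atom by (cases p) simp
next
  fix p q assume "p \<in> points N" "q \<in> points N" "prel RA p q"
  then show "leadsA phi (model_label N \<sigma> phi p) (model_label N \<sigma> phi q)"
    using model_label_leadsA by (cases p, cases q) (auto simp: points_def)
next
  fix p q assume "p \<in> points N" "q \<in> points N" "prel RB p q"
  then show "leadsB phi (model_label N \<sigma> phi p) (model_label N \<sigma> phi q)"
    using model_label_leadsB by (cases p, cases q) (auto simp: points_def)
next
  fix p R a assume p: "p \<in> points N" and a: "a \<in> Req phi R (model_label N \<sigma> phi p)"
  obtain x y where xy: "p = (x, y)" by fastforce
  show "\<exists>q\<in>points N. prel R p q \<and> a \<in> obs phi (model_label N \<sigma> phi q)"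
    using a p sat_Dia[of x y N \<sigma> R a] unfolding xy Req_model_label
    by (force simp: obs_model_label)
qed

lemma ex_shift:
  fixes l h k :: nat
  shows "(\<exists>z. l + k < z \<and> z < h \<and> P z) \<longleftrightarrow> (\<exists>z. l < z \<and> z < h - k \<and> P (z + k))"
proof
  assume "\<exists>z. l + k < z \<and> z < h \<and> P z"
  then obtain z where "l + k < z" "z < h" "P z" by blast
  then show "\<exists>z. l < z \<and> z < h - k \<and> P (z + k)" by (intro exI[of _ "z - k"]) auto
next
  assume "\<exists>z. l < z \<and> z < h - k \<and> P (z + k)"
  then obtain z where "l < z" "z < h - k" "P (z + k)" by blast
  then show "\<exists>z. l + k < z \<and> z < h \<and> P z" by (intro exI[of _ "z + k"]) auto
qed

lemma sat_shift: "sat N \<sigma> (x + k) (y + k) a = sat (N - k) (\<lambda>u v. \<sigma> (u + k) (v + k)) x y a"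
proof (induction a arbitrary: x y)
  case (Dia R a)
  then show ?case using ex_shift[of y k N] ex_shift[of x k "y + k"] by (cases R) auto
qed auto

section \<open>Cutting out the region between two equal columns\<close>

definition column :: "(nat \<times> nat \<Rightarrow> 'a) \<Rightarrow> nat \<Rightarrow> 'a set" where
  "column L y = (\<lambda>x. L (x, y)) ` {..<y}"

text \<open>If two columns y < y' of a compass structure carry the same set of labels,
  the columns y, \<dots>, y' - 1 can be cut out: rows starting at or after y
  are moved left, and every other row a is continued after column y by
  the row of a twin x < y' with L(x, y') = L(a, y).\<close>
locale column_repetition =
  fixes phi :: "'p form" and N :: nat and L :: "nat \<times> nat \<Rightarrow> 'p form set" and y y' :: nat
  assumes compass: "compass phi N L"
    and y_pos: "0 < y" and y_less: "y < y'" and y'_less: "y' < N"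
    and same_column: "column L y = column L y'"
begin

definition gap :: nat where "gap = y' - y"

definition N_cut :: nat where "N_cut = N - gap"

text \<open>For a row a < y, a row meeting column y' with the label that row a has at
  column y; it exists because the two columns carry the same labels.\<close>
definition twin :: "nat \<Rightarrow> nat" where
  "twin a = (SOME x. x < y' \<and> L (x, y') = L (a, y))"

definition row_cut :: "nat \<Rightarrow> nat \<Rightarrow> 'p form set" where
  "row_cut a = (if y \<le> a then (\<lambda>b. L (a + gap, b + gap))
                else row_splice (\<lambda>b. L (a, b)) (\<lambda>b. L (twin a, b)) y gap)"

definition L_cut :: "nat \<times> nat \<Rightarrow> 'p form set" where
  "L_cut = (\<lambda>(a, b). row_cut a b)"

definition origin :: "nat \<Rightarrow> nat" where
  "origin b = (if b < y then b else b + gap)"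

lemma y'_eq: "y' = y + gap" and N_eq: "N = N_cut + gap" and y_less_N_cut: "y < N_cut"
  using y_less y'_less by (auto simp: gap_def N_cut_def)

lemma N_cut_less: "N_cut < N"
  using y_less y'_less by (simp add: gap_def N_cut_def)

lemma twin: "a < y \<Longrightarrow> twin a < y' \<and> L (twin a, y') = L (a, y)"
proof -
  assume "a < y"
  then have "L (a, y) \<in> column L y'" using same_column by (auto simp: column_def)
  then have "\<exists>x. x < y' \<and> L (x, y') = L (a, y)" by (auto simp: column_def)
  then show ?thesis unfolding twin_def by (rule someI_ex)
qed

lemma origin_mono: "a < b \<Longrightarrow> origin a < origin b"
  by (simp add: origin_def)

lemma origin_less: "b < N_cut \<Longrightarrow> origin b < N"
  using N_eq y_less_N_cut by (simp add: origin_def)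

lemma L_cut_origin:
  assumes "a < b" "b < N_cut"
  shows "\<exists>a'. a' < origin b \<and> L_cut (a, b) = L (a', origin b)"
proof (cases "y \<le> a")
  case True
  then show ?thesis using assms by (intro exI[of _ "a + gap"]) (simp add: L_cut_def row_cut_def origin_def)
next
  case False
  show ?thesis
  proof (cases "b < y")
    case True
    then show ?thesis using assms False
      by (intro exI[of _ a]) (simp add: L_cut_def row_cut_def origin_def row_splice_def)
  next
    case b_late: False
    then show ?thesis using False twin[of a] y'_eq
      by (intro exI[of _ "twin a"]) (simp add: L_cut_def row_cut_def origin_def row_splice_def)
  qed
qed

lemma row_cut_good: "good_row phi a N_cut (row_cut a)"
proof (cases "y \<le> a")
  case True
  have "good_row phi (a + gap) (N_cut + gap) (\<lambda>b. L (a + gap, b))"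
    using compass_row[OF compass] N_eq by simp
  then show ?thesis using True good_row_shift[of phi a gap N_cut] by (simp add: row_cut_def)
next
  case False
  have r1: "good_row phi a N (\<lambda>b. L (a, b))"
    and r2: "good_row phi (twin a) (N_cut + gap) (\<lambda>b. L (twin a, b))"
    using compass_row[OF compass] N_eq by simp_all
  have same: "L (a, y) = L (twin a, y + gap)" using False twin[of a] y'_eq by simp
  have "good_row phi a N_cut (row_splice (\<lambda>b. L (a, b)) (\<lambda>b. L (twin a, b)) y gap)"
    using good_row_splice[OF r1 r2 _ _ _ _ same] False twin[of a] y'_eq y_less_N_cut N_cut_less
    by simp
  then show ?thesis using False by (simp add: row_cut_def)
qed

lemma row_content_cut:
  assumes b: "a < b" "b < N_cut" and z: "origin a < z" "z < N"
  shows "row_content phi (L_cut (a, b)) = row_content phi (L (origin a, z))"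
proof (cases "y \<le> a")
  case True
  then show ?thesis
    using row_content_const[OF compass_row[OF compass], of "a + gap" "b + gap" z] b z N_eq
    by (simp add: L_cut_def row_cut_def origin_def)
next
  case False
  have "row_content phi (L_cut (a, b)) = row_content phi (row_cut a y)"
    using row_content_const[OF row_cut_good, of a b y] b False y_less_N_cut
    by (simp add: L_cut_def)
  also have "row_cut a y = L (a, y)"
    using False twin[of a] y'_eq by (simp add: row_cut_def row_splice_def)
  also have "row_content phi (L (a, y)) = row_content phi (L (a, z))"
    using row_content_const[OF compass_row[OF compass], of a y z] False z y_less y'_less
    by (simp add: origin_def)
  finally show ?thesis using False by (simp add: origin_def)
qed

text \<open>A-consistency survives the cut because it only compares A-requests with row
  contents, and both are inherited from the original structure.\<close>
lemma cut_leadsA: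
  assumes abc: "a < b" "b < c" "c < N_cut"
  shows "leadsA phi (L_cut (a, b)) (L_cut (b, c))"
proof -
  obtain a' where a': "a' < origin b" "L_cut (a, b) = L (a', origin b)"
    using L_cut_origin[OF abc(1) less_trans[OF abc(2,3)]] by blast
  have "Req phi RA (L_cut (a, b)) = row_content phi (L (origin b, origin c))"
    unfolding a'(2)
    using compass_ReqA[OF compass a'(1) origin_mono[OF abc(2)] origin_less[OF abc(3)]] .
  also have "\<dots> = row_content phi (L_cut (b, c))"
    using row_content_cut[OF abc(2,3) origin_mono[OF abc(2)] origin_less[OF abc(3)]] by simp
  finally show ?thesis by (simp add: leadsA_iff_row_content)
qed

text \<open>An A-request is part of the row content of the row it points to; that row is
  non-empty in the cut structure, and good rows fulfil their row content.\<close>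
lemma cut_fulfil_A:
  assumes ab: "a < b" "b < N_cut" and al: "al \<in> Req phi RA (L_cut (a, b))"
  shows "\<exists>c. b < c \<and> c < N_cut \<and> al \<in> obs phi (L_cut (b, c))"
proof -
  obtain a' where a': "a' < origin b" "L_cut (a, b) = L (a', origin b)"
    using L_cut_origin[OF ab] by blast
  then obtain z where z: "origin b < z" "z < N" "al \<in> obs phi (L (origin b, z))"
    using compass_fulfil_A[OF compass, of a' "origin b" al] al origin_less[OF ab(2)] by auto
  have next_col: "b + 1 < N_cut"
    using z ab y_less_N_cut N_eq by (cases "b < y") (auto simp: origin_def)
  then have "row_content phi (L_cut (b, b + 1)) = row_content phi (L (origin b, z))"
    using row_content_cut z by simp
  then have "al \<in> row_content phi (row_cut b (b + 1))"
    using z(3) by (simp add: L_cut_def row_content_def)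
  then show ?thesis
    using row_content_fulfilled[OF row_cut_good, of b "b + 1" al] next_col
    by (simp add: L_cut_def)
qed

lemma cut_compass: "compass phi N_cut L_cut"
proof (rule compassI)
  fix a b assume ab: "a < b" "b < N_cut"
  then obtain a' where a': "a' < origin b" "L_cut (a, b) = L (a', origin b)"
    using L_cut_origin by blast
  show "is_atom phi (L_cut (a, b))"
    unfolding a'(2) using compass_atom[OF compass a'(1) origin_less[OF ab(2)]] .
next
  fix a show "good_row phi a N_cut (\<lambda>b. L_cut (a, b))"
    using row_cut_good by (simp add: L_cut_def)
qed (fact cut_leadsA cut_fulfil_A)+

text \<open>Since y > 0, row 0 keeps its row content.\<close>
lemma cut_row_zero: "row_content phi (L_cut (0, 1)) = row_content phi (L (0, 1))"
  using row_content_cut[of 0 1 1] y_pos y_less_N_cut y_less y'_less by (simp add: origin_def)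

end

section \<open>Counting atoms\<close>

definition atoms :: "'p form \<Rightarrow> 'p form set set" where
  "atoms phi = {F. is_atom phi F}"

lemma finite_atoms: "finite (atoms phi)"
proof -
  have "atoms phi \<subseteq> Pow (ClPlus phi)" by (auto simp: atoms_def is_atom_def)
  then show ?thesis using finite_ClPlus finite_subset by blast
qed

definition positive :: "'p form set \<Rightarrow> 'p form set" where
  "positive S = {t \<in> S. \<forall>c. t \<noteq> Neg c}"

text \<open>An atom is determined by its positive formulas, since it contains a negation
  exactly when it does not contain the negated formula.\<close>
lemma atom_eq:
  assumes F: "is_atom phi F" and G: "is_atom phi G"
    and pos: "F \<inter> positive (ClPlus phi) = G \<inter> positive (ClPlus phi)"
  shows "F = G"
proof -
  have "t \<in> F \<longleftrightarrow> t \<in> G" for t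
  proof (induction t)
    case (Neg c)
    show ?case
    proof (cases "Neg c \<in> ClPlus phi")
      case True
      then have "Neg c \<in> F \<longleftrightarrow> c \<notin> F" "Neg c \<in> G \<longleftrightarrow> c \<notin> G"
        using F G unfolding is_atom_def by fastforce+
      then show ?thesis using Neg.IH by simp
    next
      case False then show ?thesis using F G unfolding is_atom_def by blast
    qed
  qed (use F G pos in \<open>auto simp: is_atom_def positive_def\<close>)
  then show ?thesis by blast
qed

lemma card_atoms_positive: "card (atoms phi) \<le> 2 ^ card (positive (ClPlus phi))"
proof -
  have fin: "finite (positive (ClPlus phi))"
    unfolding positive_def by (rule finite_subset[OF _ finite_ClPlus]) auto
  have "inj_on (\<lambda>F. F \<inter> positive (ClPlus phi)) (atoms phi)"
    using atom_eq unfolding inj_on_def atoms_def by blast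
  moreover have "(\<lambda>F. F \<inter> positive (ClPlus phi)) ` atoms phi \<subseteq> Pow (positive (ClPlus phi))"
    by auto
  ultimately have "card (atoms phi) \<le> card (Pow (positive (ClPlus phi)))"
    using card_inj_on_le fin by blast
  then show ?thesis by (simp add: card_Pow[OF fin])
qed

text \<open>A positive formula of the closure is (the normal form of) a subformula: either
  itself, or the formula under the negation of a negated subformula.\<close>
lemma positive_Cl: "positive (Cl phi) \<subseteq> norm ` subs phi"
proof
  fix t assume t: "t \<in> positive (Cl phi)"
  then obtain x where x: "x \<in> subs phi" "t = norm x \<or> t = neg (norm x)"
    by (auto simp: positive_def Cl_def)
  show "t \<in> norm ` subs phi"
  proof (cases "t = norm x")
    case True then show ?thesis using x(1) by blast
  next
    case False
    then have t_neg: "t = neg (norm x)" using x(2) by blast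
    then have "norm x = Neg t"
      using t neg_of_non_Neg[of "norm x"] by (cases "norm x") (auto simp: positive_def)
    then have "t \<in> norm ` subs x" using imm_norm_subs[OF subs_self, of x] by simp
    then show ?thesis using subs_trans[OF x(1)] by blast
  qed
qed

lemma card_Cl: "card (Cl phi) \<le> 2 * fsize phi"
proof -
  have "card (Cl phi) \<le> card (norm ` subs phi) + card (neg ` norm ` subs phi)"
    unfolding Cl_def by (rule card_Un_le)
  also have "\<dots> \<le> card (subs phi) + card (subs phi)"
    using card_image_le[OF finite_subs] card_image_le[OF finite_imageI[OF finite_subs]]
    by (meson add_mono le_trans)
  finally show ?thesis by (simp add: fsize_def)
qed

text \<open>The positive formulas of the extended closure: those of the closure and the
  diamonds over the closure (boxes are negations).\<close>
lemma positive_ClPlus: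
  "positive (ClPlus phi) \<subseteq> positive (Cl phi) \<union> (\<lambda>(R, a). Dia R a) ` (UNIV \<times> Cl phi)"
  unfolding ClPlus_def positive_def by auto

text \<open>At most |phi| + 3 * 2|phi| = 7|phi| positive formulas.\<close>
lemma card_positive_ClPlus: "card (positive (ClPlus phi)) \<le> 7 * fsize phi"
proof -
  have "card ((\<lambda>(R, a). Dia R a) ` (UNIV \<times> Cl phi)) \<le> card ((UNIV :: rel set) \<times> Cl phi)"
    by (rule card_image_le) (simp add: finite_Cl UNIV_rel)
  also have "\<dots> = 3 * card (Cl phi)" by (simp add: card_cartesian_product UNIV_rel)
  finally have dia: "card ((\<lambda>(R, a). Dia R a) ` (UNIV \<times> Cl phi)) \<le> 6 * fsize phi"
    using card_Cl[of phi] by linarith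
  have pos: "card (positive (Cl phi)) \<le> fsize phi"
    using card_mono[OF finite_imageI[OF finite_subs] positive_Cl] card_image_le[OF finite_subs]
    unfolding fsize_def by (meson le_trans)
  have "card (positive (ClPlus phi))
        \<le> card (positive (Cl phi) \<union> (\<lambda>(R, a). Dia R a) ` (UNIV \<times> Cl phi))"
    by (rule card_mono[OF _ positive_ClPlus])
      (simp add: finite_Cl UNIV_rel positive_def finite_subset[OF _ finite_Cl])
  also have "\<dots> \<le> card (positive (Cl phi)) + card ((\<lambda>(R, a). Dia R a) ` (UNIV \<times> Cl phi))"
    by (rule card_Un_le)
  finally show ?thesis using dia pos by linarith
qed

lemma card_atoms: "card (atoms phi) \<le> 2 ^ (7 * fsize phi)"
proof -
  have "(2::nat) ^ card (positive (ClPlus phi)) \<le> 2 ^ (7 * fsize phi)"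
    by (rule power_increasing[OF card_positive_ClPlus]) simp
  then show ?thesis using card_atoms_positive[of phi] by linarith
qed

section \<open>The small model property\<close>

lemma column_atoms: "compass phi N L \<Longrightarrow> y < N \<Longrightarrow> column L y \<subseteq> atoms phi"
  using compass_atom by (fastforce simp: column_def atoms_def)

lemma repeated_column:
  assumes compass: "compass phi N L" and long: "2 ^ card (atoms phi) < N"
  shows "\<exists>y y'. 0 < y \<and> y < y' \<and> y' < N \<and> column L y = column L y'"
proof -
  have "column L ` {..<N} \<subseteq> Pow (atoms phi)" using column_atoms[OF compass] by auto
  moreover have "card (Pow (atoms phi)) < card {..<N}"
    using long by (simp add: card_Pow[OF finite_atoms])
  ultimately have "\<not> inj_on (column L) {..<N}"
    using card_inj_on_le[of "column L" "{..<N}" "Pow (atoms phi)"] finite_atoms by fastforce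
  then obtain y y' where yy': "y < y'" "y' < N" "column L y = column L y'"
    unfolding inj_on_def by (metis lessThan_iff linorder_neqE_nat)
  moreover have "column L y' \<noteq> {}" using yy' by (auto simp: column_def)
  then have "0 < y" using yy'(3) by (auto simp: column_def)
  ultimately show ?thesis by blast
qed

text \<open>Cutting repeated columns preserves the row content of row 0, so the formula stays
  featured; repeating until no two columns are equal bounds the length.\<close>
lemma small_model:
  assumes "compass phi N L" "1 < N" "norm phi \<in> row_content phi (L (0, 1))"
  shows "\<exists>N' L'. N' \<le> 2 ^ card (atoms phi) \<and> compass phi N' L' \<and> features phi N' L' (norm phi)"
  using assms
proof (induction N arbitrary: L rule: less_induct)
  case (less N)
  show ?case
  proof (cases "N \<le> 2 ^ card (atoms phi)")
    case True
    obtain c where "0 < c" "c < N" "norm phi \<in> obs phi (L (0, c))"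
      using row_content_fulfilled[OF compass_row[OF less.prems(1), of 0], of 1 "norm phi"]
        less.prems(2,3) by auto
    then have "features phi N L (norm phi)" by (auto simp: features_def points_def obs_def)
    then show ?thesis using True less.prems(1) by blast
  next
    case False
    then obtain y y' where yy': "0 < y" "y < y'" "y' < N" "column L y = column L y'"
      using repeated_column[OF less.prems(1)] by auto
    interpret cut: column_repetition phi N L y y'
      using less.prems(1) yy' by unfold_locales
    have "1 < cut.N_cut" using cut.y_less_N_cut yy'(1) by linarith
    then show ?thesis
      using less.IH[OF cut.N_cut_less cut.cut_compass] cut.cut_row_zero less.prems(3) by simp
  qed
qed

text \<open>A model of phi, translated so that phi holds on an interval starting at 0, yields
  a compass structure in which phi belongs to the row content of row 0.\<close>
lemma satisfiable_compass:
  assumes "fin_satisfiable phi"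
  shows "\<exists>N L. compass phi N L \<and> 1 < N \<and> norm phi \<in> row_content phi (L (0, 1))"
proof -
  obtain N \<sigma> x y where xy: "x < y" "y < N" "sat N \<sigma> x y phi"
    using assms unfolding fin_satisfiable_def by blast
  define \<sigma>' where "\<sigma>' = (\<lambda>u v. \<sigma> (u + x) (v + x))"
  define L where "L = model_label (N - x) \<sigma>' phi"
  have "sat (N - x) \<sigma>' 0 (y - x) (norm phi)"
    using xy sat_shift[of N \<sigma> 0 x "y - x" phi] by (simp add: \<sigma>'_def sat_norm)
  then have "norm phi \<in> row_content phi (L (0, y - x))"
    by (simp add: L_def obs_model_label row_content_def norm_in_Cl)
  moreover have C: "compass phi (N - x) L" unfolding L_def by (rule model_compass)
  moreover have len: "1 < N - x" "0 < y - x" "y - x < N - x" using xy by auto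
  moreover have "row_content phi (L (0, 1)) = row_content phi (L (0, y - x))"
    using row_content_const[OF compass_row[OF C], of 0 1 "y - x"] len by simp
  ultimately have "norm phi \<in> row_content phi (L (0, 1))" by simp
  then show ?thesis using C len(1) by blast
qed

theorem theorem1:
  fixes phi :: "'p form"
  shows "fin_satisfiable phi \<longleftrightarrow>
    (\<exists>N L. N \<le> 2 ^ (2 ^ (7 * fsize phi)) \<and> compass phi N L \<and> features phi N L (norm phi))"
proof
  assume "fin_satisfiable phi"
  then obtain N L where "compass phi N L" "1 < N" "norm phi \<in> row_content phi (L (0, 1))"
    using satisfiable_compass by blast
  then obtain N' L' where N': "N' \<le> 2 ^ card (atoms phi)" "compass phi N' L'"
      "features phi N' L' (norm phi)"
    using small_model by blast
  have "(2::nat) ^ card (atoms phi) \<le> 2 ^ (2 ^ (7 * fsize phi))"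
    by (rule power_increasing[OF card_atoms]) simp
  then show "\<exists>N L. N \<le> 2 ^ (2 ^ (7 * fsize phi)) \<and> compass phi N L \<and> features phi N L (norm phi)"
    using N' le_trans by blast
next
  assume "\<exists>N L. N \<le> 2 ^ (2 ^ (7 * fsize phi)) \<and> compass phi N L \<and> features phi N L (norm phi)"
  then show "fin_satisfiable phi" using compass_model by blast
qed

end
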